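(* Let $\mathcal{N}(\mathcal{K})=(\mathcal{S},\mathcal{C},\mathcal{R},\mathcal{K})$ be a reaction-weighted chemical reaction network and let $\tilde{\mathcal{N}}(\tilde{\mathcal{B}})=(\tilde{\mathcal{S}},\tilde{\mathcal{C}},\tilde{\mathcal{C}}_K,\tilde{\mathcal{R}},\tilde{\mathcal{B}})$ be an improper reaction-weighted translation of $\mathcal{N}(\mathcal{K})$ (with associated maps $h$, $h_K$). Suppose that $(\tilde{\mathcal{S}},\tilde{\mathcal{C}},\tilde{\mathcal{R}})$ is weakly reversible, that its deficiency is $\tilde\delta=0$, that $\tilde S_I\subseteq\tilde S_K$, and that there is a resolving complex set $\tilde{\mathcal{C}}_R$ with $\tilde{\mathcal{C}}_I\cap\tilde{\mathcal{C}}_R=\emptyset$. Suppose furthermore that: for every $p'\in\tilde{\mathcal{C}}_I$ there is a $k'\in\tilde{\mathcal{C}}(\tilde{\mathcal{B}})$, $k'\ne p'$, such that for every $i'\in\tilde{\mathcal{C}}_R$ and every directed path in $(\tilde{\mathcal{C}},\tilde{\mathcal{R}})$ from $p'$ to $i'$, the complex $k'$ lies on that path. Then $\mathcal{N}(\mathcal{K})$ and $\tilde{\mathcal{N}}(\tilde{\mathcal{B}})$ are steady state resolvable.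
   Context: A chemical reaction network $(\mathcal{S},\mathcal{C},\mathcal{R})$ consists of species $X_1,\dots,X_n$, complexes $C_1,\dots,C_m$ (identified with indices $1,\dots,m$) with pairwise distinct stoichiometric vectors $y_i\in\mathbb{Z}_{\ge0}^n$, and reactions $\mathcal{R}\subseteq\mathcal{C}\times\mathcal{C}$ (no self-loops); it is viewed as a directed graph on $\mathcal{C}$. A path from $C_i$ to $C_j$ is a sequence of distinct complexes $C_i=C_{\nu(1)}\to\cdots\to C_{\nu(l)}=C_j$ with each arrow a reaction. Linkage classes are the connected components of the underlying undirected graph; the network is weakly reversible if every linkage class is strongly connected. The stoichiometric subspace is $S=\mathrm{span}\{y_j-y_i:(i,j)\in\mathcal{R}\}$, $s=\dim S$, and the deficiency is $\delta=m-\ell-s$ with $\ell$ the number of linkage classes. A reaction-weight set $\mathcal{K}=\{k(i,j)\}$ has $k(i,j)>0$ iff $(i,j)\in\mathcal{R}$ and $k(i,j)=0$ otherwise. The mass action system of $\mathcal{N}(\mathcal{K})$ is $\dot{\mathbf{x}}=YA(\mathcal{K})\Psi(\mathbf{x})$, where $Y$ has columns $y_i$, $A(\mathcal{K})_{ij}=k(j,i)$ for $i\ne j$, $A(\mathcal{K})_{ii}=-\sum_l k(i,l)$, $\Psi(\mathbf{x})_i=\mathbf{x}^{y_i}$. A generalized chemical reaction network $(\mathcal{S},\mathcal{C},\mathcal{C}_K,\mathcal{R})$ is a network $(\mathcal{S},\mathcal{C},\mathcal{R})$ with kinetic complexes $(C_K)_i$ (vectors $(y_K)_i$) in one-to-one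 correspondence with $\mathcal{C}$; its generalized mass action system is $\dot{\mathbf{x}}=YA(\mathcal{K})\Psi_K(\mathbf{x})$ with $\Psi_K(\mathbf{x})_i=\mathbf{x}^{(y_K)_i}$. Graph notions refer to $(\mathcal{S},\mathcal{C},\mathcal{R})$. Kinetic-order subspace: $S_K=\mathrm{span}\{(y_K)_j-(y_K)_i:(i,j)\in\mathcal{R}\}$. Kinetically-relevant complexes $\mathcal{C}(\mathcal{K})$: those $i$ with $\sum_{j\ne i}k(i,j)(y_j-y_i)\ne0$. Reaction-weighted translation: $\tilde{\mathcal{N}}(\tilde{\mathcal{B}})$ (complexes $1,\dots,\tilde m$, vectors $\tilde y_{i'}$, kinetic vectors $(\tilde y_K)_{i'}$, weights $\tilde b(i',j')$, kinetically-relevant set $\tilde{\mathcal{C}}(\tilde{\mathcal{B}})$) is a reaction-weighted translation of $\mathcal{N}(\mathcal{K})$ if (1) there is a surjection $h:\mathcal{C}(\mathcal{K})\to\tilde{\mathcal{C}}(\tilde{\mathcal{B}})$ and numbers $\lambda(i,j')\ge0$ with (a) $\lambda(i,j')>0\Rightarrow(h(i),j')\in\tilde{\mathcal{R}}$, (b) $\sum_{\{i:h(i)=i'\}}\lambda(i,j')=\tilde b(i',j')$, (c) $\sum_{j\ne i}k(i,j)(y_j-y_i)=\sum_{j'\ne h(i)}\lambda(i,j')(\tilde y_{j'}-\tilde y_{h(i)})$; and (2) there is an injection $h_K:\tilde{\mathcal{C}}(\tilde{\mathcal{B}})\to\mathcal{C}(\mathcal{K})$ with $h(h_K(i'))=i'$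 and $(\tilde y_K)_{i'}=y_{h_K(i')}$. It is improper if $h$ is not injective. $\tilde{\mathcal{C}}_I=\{k'\in\tilde{\mathcal{C}}(\tilde{\mathcal{B}}):h(i)=h(j)=k'\text{ for some }i\ne j\}$; $h^{-1}(k')=\{i:h(i)=k'\}$; $\tilde S_I=\mathrm{span}\{y_j-y_i:i,j\in h^{-1}(k'),k'\in\tilde{\mathcal{C}}_I\}$; $\tilde S_K$ is the kinetic-order subspace of $\tilde{\mathcal{N}}$. Resolving complex set (when $\tilde{\mathcal{N}}$ is weakly reversible and $\tilde S_I\subseteq\tilde S_K$): $\tilde{\mathcal{C}}_R\subseteq\tilde{\mathcal{C}}(\tilde{\mathcal{B}})$ such that for every $i,j\in h^{-1}(k')$, $k'\in\tilde{\mathcal{C}}_I$, there are constants $c(i',j')$, $i'<j'$, with (1) $y_j-y_i=\sum_{i'<j'}c(i',j')(y_{h_K(j')}-y_{h_K(i')})$; (2) $c(i',j')\ne0$ implies $i',j'$ in the same linkage class of $\tilde{\mathcal{N}}$; (3) $c(i',j')\ne0$ implies $i',j'\in\tilde{\mathcal{C}}_R$. Steady state equivalence: the two (generalized) mass action systems have the same steady states. Steady state resolvable: there exists a reaction-weight set $\tilde{\mathcal{K}}$ for $(\tilde{\mathcal{S}},\tilde{\mathcal{C}},\tilde{\mathcal{C}}_K,\tilde{\mathcal{R}})$ such that $\mathcal{N}(\mathcal{K})$ and $\tilde{\mathcal{N}}(\tilde{\mathcal{K}})$ are steady state equivalent. *)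

theory Defs
  imports "HOL-Analysis.Analysis"
begin

text \<open>Species are indexed by a finite type 's; vectors in R^S are real^'s.
Complexes of a network are indexed by 0..<m; y i is the stoichiometric vector of complex i,
R is the reaction set (pairs of complex indices), k i j the reaction weight of (i,j).\<close>

definition cvec_ok :: "real^'s \<Rightarrow> bool" where
  "cvec_ok v \<longleftrightarrow> (\<forall>s. v $ s \<in> \<int> \<and> 0 \<le> v $ s)"

definition crn :: "nat \<Rightarrow> (nat \<Rightarrow> real^'s) \<Rightarrow> (nat \<times> nat) set \<Rightarrow> bool" where
  "crn m y R \<longleftrightarrow> inj_on y {..<m} \<and> (\<forall>i<m. cvec_ok (y i)) \<and>
     R \<subseteq> {..<m} \<times> {..<m} \<and> (\<forall>i. (i, i) \<notin> R)"

definition rw_set :: "(nat \<times> nat) set \<Rightarrow> (nat \<Rightarrow> nat \<Rightarrow> real) \<Rightarrow> bool" where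
  "rw_set R k \<longleftrightarrow> (\<forall>i j. (0 < k i j \<longleftrightarrow> (i, j) \<in> R) \<and> ((i, j) \<notin> R \<longrightarrow> k i j = 0))"

definition A_mat :: "nat \<Rightarrow> (nat \<Rightarrow> nat \<Rightarrow> real) \<Rightarrow> nat \<Rightarrow> nat \<Rightarrow> real" where
  "A_mat m k i j = (if i \<noteq> j then k j i else - (\<Sum>l<m. k i l))"

definition Psi :: "(nat \<Rightarrow> real^'s) \<Rightarrow> real^'s \<Rightarrow> nat \<Rightarrow> real" where
  "Psi yK x i = (\<Prod>s\<in>UNIV. (x $ s) powr (yK i $ s))"

text \<open>Right-hand side Y A(K) Psi_K(x) of the generalized mass action system
(mass action: yK = y).\<close>
definition gma_rhs :: "nat \<Rightarrow> (nat \<Rightarrow> real^'s) \<Rightarrow> (nat \<Rightarrow> real^'s) \<Rightarrow>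
    (nat \<Rightarrow> nat \<Rightarrow> real) \<Rightarrow> real^'s \<Rightarrow> real^'s" where
  "gma_rhs m y yK k x = (\<chi> s. \<Sum>i<m. (y i $ s) * (\<Sum>l<m. A_mat m k i l * Psi yK x l))"

definition steady_states :: "nat \<Rightarrow> (nat \<Rightarrow> real^'s) \<Rightarrow> (nat \<Rightarrow> real^'s) \<Rightarrow>
    (nat \<Rightarrow> nat \<Rightarrow> real) \<Rightarrow> (real^'s) set" where
  "steady_states m y yK k = {x. (\<forall>s. 0 < x $ s) \<and> gma_rhs m y yK k x = 0}"

definition kin_rel :: "nat \<Rightarrow> (nat \<Rightarrow> real^'s) \<Rightarrow> (nat \<Rightarrow> nat \<Rightarrow> real) \<Rightarrow> nat set" where
  "kin_rel m y k = {i. i < m \<and> (\<Sum>j\<in>{..<m} - {i}. k i j *\<^sub>R (y j - y i)) \<noteq> 0}"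

definition linked :: "nat \<Rightarrow> (nat \<times> nat) set \<Rightarrow> (nat \<times> nat) set" where
  "linked m R = {(i, j). i < m \<and> j < m \<and> (i, j) \<in> (R \<union> R\<inverse>)\<^sup>*}"

definition weakly_reversible :: "nat \<Rightarrow> (nat \<times> nat) set \<Rightarrow> bool" where
  "weakly_reversible m R \<longleftrightarrow> (\<forall>i j. (i, j) \<in> linked m R \<longrightarrow> (i, j) \<in> R\<^sup>*)"

definition n_linkage :: "nat \<Rightarrow> (nat \<times> nat) set \<Rightarrow> nat" where
  "n_linkage m R = card ({..<m} // linked m R)"

definition stoich_space :: "(nat \<Rightarrow> real^'s) \<Rightarrow> (nat \<times> nat) set \<Rightarrow> (real^'s) set" where
  "stoich_space y R = span {y j - y i | i j. (i, j) \<in> R}"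

definition deficiency :: "nat \<Rightarrow> (nat \<Rightarrow> real^'s) \<Rightarrow> (nat \<times> nat) set \<Rightarrow> int" where
  "deficiency m y R = int m - int (n_linkage m R) - int (dim (stoich_space y R))"

definition kin_order_space :: "(nat \<Rightarrow> real^'s) \<Rightarrow> (nat \<times> nat) set \<Rightarrow> (real^'s) set" where
  "kin_order_space yK R = span {yK j - yK i | i j. (i, j) \<in> R}"

text \<open>Reaction-weighted translation (mt, yt, ytK, Rt, bt) of N(K) = (m, y, R, k),
with maps h, hK and numbers lam.\<close>
definition rw_translation ::
  "nat \<Rightarrow> (nat \<Rightarrow> real^'s) \<Rightarrow> (nat \<times> nat) set \<Rightarrow> (nat \<Rightarrow> nat \<Rightarrow> real) \<Rightarrow>
   nat \<Rightarrow> (nat \<Rightarrow> real^'s) \<Rightarrow> (nat \<Rightarrow> real^'s) \<Rightarrow> (nat \<times> nat) set \<Rightarrow> (nat \<Rightarrow> nat \<Rightarrow> real) \<Rightarrow>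
   (nat \<Rightarrow> nat) \<Rightarrow> (nat \<Rightarrow> nat) \<Rightarrow> (nat \<Rightarrow> nat \<Rightarrow> real) \<Rightarrow> bool" where
  "rw_translation m y R k mt yt ytK Rt bt h hK lam \<longleftrightarrow>
     crn mt yt Rt \<and> rw_set Rt bt \<and>
     h ` kin_rel m y k = kin_rel mt yt bt \<and>
     (\<forall>i\<in>kin_rel m y k. \<forall>j'. 0 \<le> lam i j' \<and> (0 < lam i j' \<longrightarrow> (h i, j') \<in> Rt)) \<and>
     (\<forall>i'\<in>kin_rel mt yt bt. \<forall>j'.
        (\<Sum>i\<in>{i \<in> kin_rel m y k. h i = i'}. lam i j') = bt i' j') \<and>
     (\<forall>i\<in>kin_rel m y k.
        (\<Sum>j\<in>{..<m} - {i}. k i j *\<^sub>R (y j - y i)) =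
        (\<Sum>j'\<in>{..<mt} - {h i}. lam i j' *\<^sub>R (yt j' - yt (h i)))) \<and>
     inj_on hK (kin_rel mt yt bt) \<and> hK ` kin_rel mt yt bt \<subseteq> kin_rel m y k \<and>
     (\<forall>i'\<in>kin_rel mt yt bt. h (hK i') = i' \<and> ytK i' = y (hK i'))"

definition C_I :: "nat set \<Rightarrow> (nat \<Rightarrow> nat) \<Rightarrow> nat set" where
  "C_I Crel h = {k'. \<exists>i\<in>Crel. \<exists>j\<in>Crel. i \<noteq> j \<and> h i = k' \<and> h j = k'}"

definition S_I :: "(nat \<Rightarrow> real^'s) \<Rightarrow> nat set \<Rightarrow> (nat \<Rightarrow> nat) \<Rightarrow> (real^'s) set" where
  "S_I y Crel h = span {y j - y i | i j. \<exists>k'\<in>C_I Crel h.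
       i \<in> Crel \<and> j \<in> Crel \<and> h i = k' \<and> h j = k'}"

text \<open>Resolving complex set CR (Crt is the kinetically-relevant set of the translation).\<close>
definition resolving_set ::
  "nat \<Rightarrow> (nat \<times> nat) set \<Rightarrow> nat set \<Rightarrow> (nat \<Rightarrow> real^'s) \<Rightarrow> nat set \<Rightarrow>
   (nat \<Rightarrow> nat) \<Rightarrow> (nat \<Rightarrow> nat) \<Rightarrow> nat set \<Rightarrow> bool" where
  "resolving_set mt Rt Crt y Crel h hK CR \<longleftrightarrow> CR \<subseteq> Crt \<and>
     (\<forall>k'\<in>C_I Crel h. \<forall>i\<in>Crel. \<forall>j\<in>Crel. h i = k' \<longrightarrow> h j = k' \<longrightarrow>
        (\<exists>c :: nat \<Rightarrow> nat \<Rightarrow> real.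
           y j - y i = (\<Sum>(i', j')\<in>{(a, b). a < b \<and> b < mt}. c i' j' *\<^sub>R (y (hK j') - y (hK i'))) \<and>
           (\<forall>i' j'. i' < j' \<and> c i' j' \<noteq> 0 \<longrightarrow>
               (i', j') \<in> linked mt Rt \<and> i' \<in> CR \<and> j' \<in> CR)))"

definition is_path :: "(nat \<times> nat) set \<Rightarrow> nat list \<Rightarrow> nat \<Rightarrow> nat \<Rightarrow> bool" where
  "is_path R xs a b \<longleftrightarrow> xs \<noteq> [] \<and> distinct xs \<and> hd xs = a \<and> last xs = b \<and>
     (\<forall>t. Suc t < length xs \<longrightarrow> (xs ! t, xs ! Suc t) \<in> R)"

end

theory Submission
  imports Defs "HOL-Library.Transitive_Closure_Table"
begin

text \<open>Since the translation has deficiency zero, the positive steady states of any generalized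
  mass action system on it are exactly its complex balanced states. Pushing the mass action
  flux of the original network forward along h yields such a system on the translation whose
  rates, the effective rates, depend on the state x only at the complexes of C_I, through the
  monomials x^(y_i - y_K(h i)).

  At two steady states the ratio of the complex balanced monomials is constant along each
  linkage class of the resolving set: the part of the graph that a complex of C_I reaches
  before its dominating complex can be collapsed onto that complex without destroying complex
  balance, and after all such collapses the two rate matrices agree, so a maximum principle
  applies. By the definition of a resolving set, the exponents y_i - y_K(h i) are combinations
  of differences on which this ratio is constant; hence the effective rates take the same value
  at every steady state, and freezing them at one steady state gives the required weights.\<close>

section \<open>Balanced weights on weighted digraphs\<close>

definition balanced :: "'a set \<Rightarrow> ('a \<Rightarrow> 'a \<Rightarrow> real) \<Rightarrow> ('a \<Rightarrow> real) \<Rightarrow> bool" where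
  "balanced V Q z \<longleftrightarrow> (\<forall>v\<in>V. z v * (\<Sum>w\<in>V. Q v w) = (\<Sum>u\<in>V. Q u v * z u))"

definition pos_edges :: "'a set \<Rightarrow> ('a \<Rightarrow> 'a \<Rightarrow> real) \<Rightarrow> ('a \<times> 'a) set" where
  "pos_edges V Q = {(u, v). u \<in> V \<and> v \<in> V \<and> 0 < Q u v}"

definition dominates :: "('a \<times> 'a) set \<Rightarrow> 'a \<Rightarrow> 'a \<Rightarrow> 'a set \<Rightarrow> bool" where
  "dominates E p d C \<longleftrightarrow> (\<forall>c\<in>C. (p, c) \<notin> (E - UNIV \<times> {d})\<^sup>*)"

lemma sum_pos_iff_ex_pos:
  fixes f :: "'a \<Rightarrow> real"
  assumes "finite S" and "\<forall>i\<in>S. 0 \<le> f i"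
  shows "0 < sum f S \<longleftrightarrow> (\<exists>i\<in>S. 0 < f i)"
proof -
  have "0 \<le> sum f S"
    using assms(2) by (simp add: sum_nonneg)
  then show ?thesis
    using sum_nonneg_eq_0_iff[OF assms(1), of f] assms(2) by (auto simp: less_le)
qed

lemma rtrancl_avoiding_source: "(x, y) \<in> E\<^sup>* \<Longrightarrow> (x, y) \<in> (E - UNIV \<times> {x})\<^sup>*"
proof (induction rule: rtrancl_induct)
  case (step y z)
  then show ?case
    by (cases "z = x") (auto intro: rtrancl_into_rtrancl)
qed simp

lemma balanced_ratio_deviation_sum:
  assumes pos: "\<forall>v\<in>V. 0 < z v" and bal: "balanced V Q z" "balanced V Q z'" and wV: "w \<in> V"
  shows "(\<Sum>x\<in>V. Q x w * z x * (z' w / z w - z' x / z x)) = 0"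
proof -
  define r where "r x = z' x / z x" for x
  have z'_eq: "z' x = r x * z x" if "x \<in> V" for x
  proof -
    have "z x \<noteq> 0"
      using pos that by force
    then show ?thesis
      unfolding r_def by simp
  qed
  have "(\<Sum>x\<in>V. Q x w * z x * (r w - r x))
      = r w * (\<Sum>x\<in>V. Q x w * z x) - (\<Sum>x\<in>V. Q x w * (r x * z x))"
    by (simp add: sum_subtractf sum_distrib_left algebra_simps)
  also have "(\<Sum>x\<in>V. Q x w * (r x * z x)) = (\<Sum>x\<in>V. Q x w * z' x)"
    using z'_eq by simp
  also have "r w * (\<Sum>x\<in>V. Q x w * z x) = r w * z w * (\<Sum>x\<in>V. Q w x)"
    using bal(1) wV unfolding balanced_def by simp
  also have "\<dots> = (\<Sum>x\<in>V. Q x w * z' x)"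
    using bal(2) wV unfolding balanced_def z'_eq[OF wV, symmetric] by simp
  finally show ?thesis
    unfolding r_def by simp
qed

lemma balanced_ratio_max_propagates:
  assumes fin: "finite V" and nonneg: "\<forall>u v. 0 \<le> Q u v"
    and pos: "\<forall>v\<in>V. 0 < z v" and bal: "balanced V Q z" "balanced V Q z'"
    and wV: "w \<in> V" and max: "\<forall>x\<in>V. 0 < Q x w \<longrightarrow> z' x / z x \<le> z' w / z w"
    and uV: "u \<in> V" and uw: "0 < Q u w"
  shows "z' u / z u = z' w / z w"
proof -
  define r where "r x = z' x / z x" for x
  have nonneg_terms: "\<forall>x\<in>V. 0 \<le> Q x w * z x * (r w - r x)"
  proof
    fix x assume xV: "x \<in> V"
    show "0 \<le> Q x w * z x * (r w - r x)"
    proof (cases "0 < Q x w")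
      case True
      then have "r x \<le> r w"
        using max xV unfolding r_def by blast
      moreover have "0 \<le> Q x w * z x"
        using nonneg pos xV by (simp add: less_imp_le)
      ultimately show ?thesis
        by simp
    next
      case False
      then have "Q x w = 0"
        using nonneg[rule_format, of x w] by linarith
      then show ?thesis
        by simp
    qed
  qed
  have "\<forall>x\<in>V. Q x w * z x * (r w - r x) = 0"
    using sum_nonneg_eq_0_iff[OF fin, of "\<lambda>x. Q x w * z x * (r w - r x)"] nonneg_terms
      balanced_ratio_deviation_sum[OF pos bal wV]
    unfolding r_def by simp
  then have "Q u w * z u * (r w - r u) = 0"
    using uV by blast
  moreover have "Q u w * z u \<noteq> 0"
    using uw pos uV by force
  ultimately have "r u = r w"
    by simp
  then show ?thesis
    unfolding r_def .
qed

lemma balanced_ratio_eq: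
  assumes fin: "finite V" and nonneg: "\<forall>u v. 0 \<le> Q u v"
    and pos: "\<forall>v\<in>V. 0 < z v" and bal: "balanced V Q z" "balanced V Q z'"
    and sym: "sym ((pos_edges V Q)\<^sup>*)"
    and aV: "a \<in> V" and ab: "(a, b) \<in> (pos_edges V Q)\<^sup>*"
  shows "z' a / z a = z' b / z b"
proof -
  let ?E = "pos_edges V Q"
  define r where "r x = z' x / z x" for x
  define K where "K = {u \<in> V. (u, a) \<in> ?E\<^sup>*}"
  have "a \<in> K"
    using aV unfolding K_def by simp
  have "finite (r ` K)"
    using fin unfolding K_def by simp
  moreover have "r ` K \<noteq> {}"
    using \<open>a \<in> K\<close> by blast
  ultimately obtain v where vK: "v \<in> K" and "r v = Max (r ` K)"
    using Max_in by (metis imageE)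
  then have vmax: "\<forall>u\<in>K. r u \<le> r v"
    using \<open>finite (r ` K)\<close> by simp
  have in_K: "u \<in> K" if "(u, v) \<in> ?E\<^sup>*" for u
  proof -
    have "u \<in> V"
      using that vK unfolding K_def by (cases rule: converse_rtranclE) (auto simp: pos_edges_def)
    then show ?thesis
      using that vK unfolding K_def by (auto intro: rtrancl_trans)
  qed
  have const: "r u = r v" if "(u, v) \<in> ?E\<^sup>*" for u
    using that
  proof (induction rule: converse_rtrancl_induct)
    case (step u x)
    have max: "\<forall>u'\<in>V. 0 < Q u' x \<longrightarrow> r u' \<le> r x"
    proof (intro ballI impI)
      fix u' assume "u' \<in> V" "0 < Q u' x"
      then have "(u', x) \<in> ?E"
        using step.hyps(1) unfolding pos_edges_def by auto
      then have "u' \<in> K"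
        using in_K step.hyps(2) by (meson converse_rtrancl_into_rtrancl)
      then show "r u' \<le> r x"
        using vmax step.IH by simp
    qed
    have "x \<in> V" "u \<in> V" "0 < Q u x"
      using step.hyps(1) unfolding pos_edges_def by auto
    then have "r u = r x"
      using balanced_ratio_max_propagates[OF fin nonneg pos bal _ max[unfolded r_def]] unfolding r_def by blast
    then show ?case
      using step.IH by simp
  qed simp
  have av: "(a, v) \<in> ?E\<^sup>*"
    using vK sym unfolding K_def sym_def by blast
  moreover have "(b, v) \<in> ?E\<^sup>*"
    using av ab sym unfolding sym_def by (meson rtrancl_trans)
  ultimately have "r a = r b"
    using const by metis
  then show ?thesis
    unfolding r_def .
qed

lemma balanced_flux_out_eq_in:
  assumes fin: "finite V" and AV: "A \<subseteq> V" and bal: "balanced V Q z"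
  shows "(\<Sum>v\<in>A. \<Sum>x\<in>V - A. Q v x * z v) = (\<Sum>v\<in>A. \<Sum>u\<in>V - A. Q u v * z u)"
proof -
  have split: "sum f V = sum f A + sum f (V - A)" for f :: "'a \<Rightarrow> real"
    using sum.subset_diff[OF AV fin, of f] by linarith
  have "(\<Sum>v\<in>A. \<Sum>x\<in>V. Q v x * z v) = (\<Sum>v\<in>A. z v * (\<Sum>x\<in>V. Q v x))"
    by (simp add: sum_distrib_left mult.commute)
  also have "\<dots> = (\<Sum>v\<in>A. \<Sum>u\<in>V. Q u v * z u)"
    using bal AV unfolding balanced_def by (intro sum.cong) auto
  finally have "(\<Sum>v\<in>A. \<Sum>x\<in>V. Q v x * z v) = (\<Sum>v\<in>A. \<Sum>u\<in>V. Q u v * z u)" .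
  moreover have "(\<Sum>v\<in>A. \<Sum>x\<in>A. Q v x * z v) = (\<Sum>v\<in>A. \<Sum>u\<in>A. Q u v * z u)"
    by (rule sum.swap)
  ultimately show ?thesis
    unfolding split[of "\<lambda>x. Q _ x * _"] split[of "\<lambda>u. Q u _ * z u"] sum.distrib by simp
qed

definition redirect :: "'a set \<Rightarrow> ('a \<Rightarrow> 'a \<Rightarrow> real) \<Rightarrow> 'a \<Rightarrow> 'a \<Rightarrow> 'a \<Rightarrow> real" where
  "redirect A Q d u w = Q u w + (if w = d then (\<Sum>v\<in>A. Q u v) else 0)"

lemma redirect_nonneg: "\<forall>u v. 0 \<le> Q u v \<Longrightarrow> \<forall>u v. 0 \<le> redirect A Q d u v"
  unfolding redirect_def by (simp add: sum_nonneg)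

lemma redirect_pos_iff:
  assumes "\<forall>u v. 0 \<le> Q u v" and "finite A"
  shows "0 < redirect A Q d u w \<longleftrightarrow> 0 < Q u w \<or> (w = d \<and> (\<exists>v\<in>A. 0 < Q u v))"
  using assms sum_pos_iff_ex_pos[OF assms(2), of "Q u"] sum_nonneg[of A "Q u"]
  unfolding redirect_def by (smt (verit))

lemma sum_redirect_row:
  assumes "finite V" and "A \<subseteq> V" and "d \<in> V - A"
  shows "(\<Sum>x\<in>V - A. redirect A Q d w x) = (\<Sum>x\<in>V. Q w x)"
proof -
  have "(\<Sum>x\<in>V - A. if x = d then sum (Q w) A else 0) = sum (Q w) A"
    using sum.delta[of "V - A" d "\<lambda>_. sum (Q w) A"] assms by simp
  moreover have "sum (Q w) V = sum (Q w) A + sum (Q w) (V - A)"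
    using sum.subset_diff[OF assms(2,1), of "Q w"] by linarith
  ultimately show ?thesis
    unfolding redirect_def sum.distrib by simp
qed

lemma sum_redirect_column:
  "(\<Sum>u\<in>B. redirect A Q d u w * z u) = (\<Sum>u\<in>B. Q u w * z u) +
      (if w = d then (\<Sum>v\<in>A. \<Sum>u\<in>B. Q u v * z u) else 0)"
proof -
  have "(\<Sum>u\<in>B. (\<Sum>v\<in>A. Q u v) * z u) = (\<Sum>v\<in>A. \<Sum>u\<in>B. Q u v * z u)"
    unfolding sum_distrib_right by (rule sum.swap)
  then show ?thesis
    unfolding redirect_def by (simp add: sum.distrib distrib_right)
qed

lemma balanced_redirect:
  assumes fin: "finite V" and AV: "A \<subseteq> V" and dV: "d \<in> V" and dA: "d \<notin> A"
    and closed: "\<forall>u\<in>A. \<forall>w\<in>V. Q u w \<noteq> 0 \<longrightarrow> w \<in> A \<or> w = d"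
    and bal: "balanced V Q z"
  shows "balanced (V - A) (redirect A Q d) z"
  unfolding balanced_def
proof
  fix w assume wV: "w \<in> V - A"
  have dVA: "d \<in> V - A"
    using dV dA by simp
  have from_A: "(\<Sum>u\<in>A. Q u w * z u) = (if w = d then (\<Sum>v\<in>A. \<Sum>u\<in>V - A. Q u v * z u) else 0)"
  proof (cases "w = d")
    case True
    have "(\<Sum>x\<in>V - A. Q u x * z u) = Q u d * z u" if "u \<in> A" for u
    proof -
      have "(\<Sum>x\<in>V - A. Q u x * z u) = (\<Sum>x\<in>V - A. if x = d then Q u d * z u else 0)"
        using closed that by (intro sum.cong) auto
      then show ?thesis
        using sum.delta[of "V - A" d "\<lambda>_. Q u d * z u"] fin dVA by simp
    qed
    then have "(\<Sum>u\<in>A. Q u d * z u) = (\<Sum>u\<in>A. \<Sum>x\<in>V - A. Q u x * z u)"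
      by simp
    then show ?thesis
      using True balanced_flux_out_eq_in[OF fin AV bal] by simp
  next
    case False
    have "Q u w * z u = 0" if "u \<in> A" for u
      using closed that wV False by auto
    then show ?thesis
      using False by (simp add: sum.neutral)
  qed
  have "z w * (\<Sum>x\<in>V. Q w x) = (\<Sum>u\<in>V. Q u w * z u)"
    using bal wV unfolding balanced_def by simp
  moreover have "(\<Sum>u\<in>V. Q u w * z u) = (\<Sum>u\<in>A. Q u w * z u) + (\<Sum>u\<in>V - A. Q u w * z u)"
    using sum.subset_diff[OF AV fin] by (simp add: add.commute)
  ultimately show "z w * (\<Sum>x\<in>V - A. redirect A Q d w x) = (\<Sum>u\<in>V - A. redirect A Q d u w * z u)"
    unfolding sum_redirect_row[OF fin AV dVA] sum_redirect_column from_A by simp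
qed

text \<open>Every edge leaving the block enters d,
  so redirecting the edges into the block onto d keeps a balanced weight balanced on the rest of
  the graph (lemma balanced_redirect).\<close>

locale dominated_block =
  fixes V :: "'a set" and Q :: "'a \<Rightarrow> 'a \<Rightarrow> real" and p d :: 'a
  assumes finite_V: "finite V" and nonneg: "\<forall>u v. 0 \<le> Q u v"
    and sym_reach: "sym ((pos_edges V Q)\<^sup>*)"
    and p_in_V: "p \<in> V" and d_in_V: "d \<in> V" and d_ne_p: "d \<noteq> p"
begin

abbreviation E :: "('a \<times> 'a) set" where
  "E \<equiv> pos_edges V Q"

definition block :: "'a set" where
  "block = {v \<in> V. (p, v) \<in> (E - UNIV \<times> {d})\<^sup>*}"

abbreviation E_red :: "('a \<times> 'a) set" where
  "E_red \<equiv> pos_edges (V - block) (redirect block Q d)"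

lemma block_subset: "block \<subseteq> V"
  unfolding block_def by auto

lemma p_in_block: "p \<in> block"
  unfolding block_def using p_in_V by simp

lemma finite_block: "finite block"
  using block_subset finite_V finite_subset by blast

lemma d_notin_block: "d \<notin> block"
proof
  assume "d \<in> block"
  then have "(p, d) \<in> (E - UNIV \<times> {d})\<^sup>*"
    unfolding block_def by simp
  then show False
    using d_ne_p by (cases rule: rtranclE) auto
qed

lemma edge_pos_iff: "(u, w) \<in> E \<longleftrightarrow> u \<in> V \<and> w \<in> V \<and> 0 < Q u w"
  unfolding pos_edges_def by simp

lemma block_edge: "u \<in> block \<Longrightarrow> (u, w) \<in> E \<Longrightarrow> w \<in> block \<or> w = d"
  unfolding block_def using edge_pos_iff by (auto intro: rtrancl_into_rtrancl)

lemma block_closed: "\<forall>u\<in>block. \<forall>w\<in>V. Q u w \<noteq> 0 \<longrightarrow> w \<in> block \<or> w = d"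
  using block_edge block_subset nonneg edge_pos_iff by (metis less_eq_real_def subsetD)

lemma leave_block_through_d:
  assumes "(v, x) \<in> E\<^sup>*" and "v \<in> block" and "x \<notin> block"
  shows "(v, d) \<in> (E \<inter> block \<times> UNIV)\<^sup>*"
proof -
  have "(x \<in> block \<and> (v, x) \<in> (E \<inter> block \<times> UNIV)\<^sup>*) \<or> (v, d) \<in> (E \<inter> block \<times> UNIV)\<^sup>*"
    using assms(1)
  proof (induction rule: rtrancl_induct)
    case (step x x')
    then show ?case
      using block_edge by (blast intro: rtrancl_into_rtrancl)
  qed (use assms(2) in simp)
  then show ?thesis
    using assms(3) by blast
qed

lemma red_edge_iff:
  "(u, w) \<in> E_red \<longleftrightarrow>
     u \<in> V - block \<and> w \<in> V - block \<and> (0 < Q u w \<or> (w = d \<and> (\<exists>v\<in>block. 0 < Q u v)))"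
  unfolding pos_edges_def using redirect_pos_iff[OF nonneg finite_block] by auto

lemma reach_imp_red_reach:
  assumes "(u, w) \<in> E\<^sup>*" and "u \<in> V - block"
  shows "(w \<in> V - block \<and> (u, w) \<in> E_red\<^sup>*) \<or> (w \<in> block \<and> (u, d) \<in> E_red\<^sup>*)"
  using assms(1)
proof (induction rule: rtrancl_induct)
  case (step x x')
  have x': "x \<in> V" "x' \<in> V" "0 < Q x x'"
    using step.hyps(2) edge_pos_iff by auto
  from step.IH show ?case
  proof (elim disjE conjE)
    assume "x \<in> V - block" "(u, x) \<in> E_red\<^sup>*"
    moreover have "(x, if x' \<in> block then d else x') \<in> E_red"
      using x' \<open>x \<in> V - block\<close> d_in_V d_notin_block unfolding red_edge_iff by auto
    ultimately show ?thesis
      using x' by (cases "x' \<in> block") (auto intro: rtrancl_into_rtrancl)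
  next
    assume "x \<in> block" "(u, d) \<in> E_red\<^sup>*"
    then show ?thesis
      using block_edge[OF _ step.hyps(2)] d_in_V d_notin_block by auto
  qed
qed (use assms(2) in simp)

lemma red_reach_imp_reach:
  assumes "(u, w) \<in> E_red\<^sup>*"
  shows "(u, w) \<in> E\<^sup>*"
  using assms
proof (induction rule: rtrancl_induct)
  case (step x z)
  have "(x, z) \<in> E\<^sup>*"
  proof (cases "0 < Q x z")
    case True
    then have "(x, z) \<in> E"
      using step.hyps(2) unfolding red_edge_iff edge_pos_iff by blast
    then show ?thesis
      by simp
  next
    case False
    then obtain v where z: "z = d" "x \<in> V - block" and v: "v \<in> block" "0 < Q x v"
      using step.hyps(2) unfolding red_edge_iff by blast
    then have xv: "(x, v) \<in> E"
      using block_subset edge_pos_iff by blast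
    then have "(v, x) \<in> E\<^sup>*"
      using sym_reach unfolding sym_def by blast
    then have "(v, d) \<in> E\<^sup>*"
      using leave_block_through_d v z rtrancl_mono[of "E \<inter> block \<times> UNIV" E] by blast
    then show ?thesis
      using xv z by (simp add: converse_rtrancl_into_rtrancl)
  qed
  with step.IH show ?case
    by (rule rtrancl_trans)
qed simp

lemma sym_red_reach: "sym (E_red\<^sup>*)"
  unfolding sym_def
proof (intro allI impI)
  fix u w assume uw: "(u, w) \<in> E_red\<^sup>*"
  show "(w, u) \<in> E_red\<^sup>*"
  proof (cases "u = w")
    case False
    have "u \<in> V - block"
      using uw False by (cases rule: converse_rtranclE) (auto simp: red_edge_iff)
    moreover have "w \<in> V - block"
      using uw False by (cases rule: rtranclE) (auto simp: red_edge_iff)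
    moreover have "(w, u) \<in> E\<^sup>*"
      using red_reach_imp_reach[OF uw] sym_reach unfolding sym_def by blast
    ultimately show ?thesis
      using reach_imp_red_reach by blast
  qed simp
qed

lemma red_avoiding_imp_avoiding:
  assumes "d' \<notin> block" and "(x, y) \<in> (E_red - UNIV \<times> {d'})\<^sup>*"
  shows "(x, y) \<in> (E - UNIV \<times> {d'})\<^sup>*"
  using assms(2)
proof (induction rule: rtrancl_induct)
  case (step y z)
  have yz: "(y, z) \<in> E_red" "z \<noteq> d'"
    using step.hyps(2) by auto
  have "(y, z) \<in> (E - UNIV \<times> {d'})\<^sup>*"
  proof (cases "0 < Q y z")
    case True
    then have "(y, z) \<in> E"
      using yz(1) unfolding red_edge_iff by (simp add: edge_pos_iff)
    then show ?thesis
      using yz(2) by blast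
  next
    case False
    then obtain v where z: "z = d" "y \<in> V - block" and v: "v \<in> block" "0 < Q y v"
      using yz unfolding red_edge_iff by blast
    then have yv: "(y, v) \<in> E - UNIV \<times> {d'}"
      using block_subset assms(1) edge_pos_iff by auto
    have "(v, y) \<in> E\<^sup>*"
      using yv sym_reach unfolding sym_def by blast
    then have "(v, d) \<in> (E \<inter> block \<times> UNIV)\<^sup>*"
      using leave_block_through_d v z by blast
    moreover have "E \<inter> block \<times> UNIV \<subseteq> E - UNIV \<times> {d'}"
      using block_edge assms(1) yz(2) z(1) by fastforce
    ultimately have "(v, d) \<in> (E - UNIV \<times> {d'})\<^sup>*"
      using rtrancl_mono by blast
    then show ?thesis
      using yv z by (simp add: converse_rtrancl_into_rtrancl)
  qed
  with step.IH show ?case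
    by (rule rtrancl_trans)
qed simp

lemma red_avoiding_d_imp_avoiding:
  assumes "d' \<in> block" and "(x, y) \<in> (E_red - UNIV \<times> {d})\<^sup>*"
  shows "(x, y) \<in> (E - UNIV \<times> {d'})\<^sup>*"
  using assms(2)
proof (induction rule: rtrancl_induct)
  case (step y z)
  have "(y, z) \<in> E_red" "z \<noteq> d"
    using step.hyps(2) by auto
  then have "(y, z) \<in> E" "z \<noteq> d'"
    using assms(1) unfolding red_edge_iff by (auto simp: edge_pos_iff)
  with step.IH show ?case
    by (blast intro: rtrancl_into_rtrancl)
qed simp

lemma reach_from_d_avoids_block:
  assumes "d' \<in> block" and "(d, c) \<in> E\<^sup>*" and "c \<notin> block"
  shows "(d, c) \<in> (E - UNIV \<times> {d'})\<^sup>*"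
proof -
  have "y \<in> block \<or> (d, y) \<in> (E - UNIV \<times> {d'})\<^sup>*" if "(d, y) \<in> (E - UNIV \<times> {d})\<^sup>*" for y
    using that
  proof (induction rule: rtrancl_induct)
    case (step y z)
    then have yz: "(y, z) \<in> E" "z \<noteq> d"
      by auto
    show ?case
    proof (cases "y \<in> block")
      case True
      then show ?thesis
        using block_edge yz by blast
    next
      case False
      then show ?thesis
        using step.IH yz assms(1) by (cases "z = d'") (auto intro: rtrancl_into_rtrancl)
    qed
  qed simp
  then show ?thesis
    using rtrancl_avoiding_source[OF assms(2)] assms(3) by blast
qed

lemma dominators_red:
  assumes C: "C \<subseteq> V - block" "C \<noteq> {}" and P: "P \<subseteq> V" "P \<inter> C = {}"
    and dominators: "\<forall>p\<in>P. \<exists>d\<in>V. d \<noteq> p \<and> dominates E p d C"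
  shows "\<forall>p2\<in>P - block. \<exists>d'\<in>V - block. d' \<noteq> p2 \<and> dominates E_red p2 d' C"
proof
  fix p2 assume "p2 \<in> P - block"
  then have p2: "p2 \<in> V - block" "p2 \<notin> C"
    using P by auto
  obtain d2 where d2: "d2 \<in> V" "d2 \<noteq> p2" and dom: "dominates E p2 d2 C"
    using dominators \<open>p2 \<in> P - block\<close> by blast
  show "\<exists>d'\<in>V - block. d' \<noteq> p2 \<and> dominates E_red p2 d' C"
  proof (cases "d2 \<in> block")
    case False
    then show ?thesis
      using dom d2 red_avoiding_imp_avoiding unfolding dominates_def by blast
  next
    case d2_block: True
    show ?thesis
    proof (cases "d = p2")
      case False
      then show ?thesis
        using dom d_in_V d_notin_block red_avoiding_d_imp_avoiding[OF d2_block]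
        unfolding dominates_def by blast
    next
      case True
      have unreachable: "(p2, c) \<notin> E_red\<^sup>*" if "c \<in> C" for c
      proof
        assume "(p2, c) \<in> E_red\<^sup>*"
        then have "(p2, c) \<in> (E - UNIV \<times> {d2})\<^sup>*"
          using reach_from_d_avoids_block[OF d2_block] red_reach_imp_reach True C(1) that by blast
        then show False
          using dom that unfolding dominates_def by blast
      qed
      obtain c0 where "c0 \<in> C"
        using C(2) by blast
      then have "c0 \<in> V - block" "c0 \<noteq> p2" "dominates E_red p2 c0 C"
        using C(1) p2(2) unreachable rtrancl_mono[of "E_red - UNIV \<times> {c0}" E_red]
        unfolding dominates_def by auto
      then show ?thesis
        by blast
    qed
  qed
qed

end

text \<open>Induction on P: collapsing the block of some p in P onto its dominator (locale
  dominated_block) removes p from P and keeps both weights balanced.\<close>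

lemma balanced_ratio_eq_dominated:
  assumes "finite V" and "\<forall>u v. 0 \<le> Q u v" and "\<forall>u v. 0 \<le> Q' u v"
    and "\<forall>u\<in>V. \<forall>v\<in>V. 0 < Q u v \<longleftrightarrow> 0 < Q' u v"
    and "\<forall>u\<in>V - P. \<forall>v\<in>V. Q u v = Q' u v"
    and "sym ((pos_edges V Q)\<^sup>*)"
    and "\<forall>v\<in>V. 0 < z v" and "balanced V Q z" and "balanced V Q' z'"
    and "P \<subseteq> V" and "C \<subseteq> V - P"
    and "\<forall>p\<in>P. \<exists>d\<in>V. d \<noteq> p \<and> dominates (pos_edges V Q) p d C"
    and "a \<in> C" and "b \<in> C" and "(a, b) \<in> (pos_edges V Q)\<^sup>*"
  shows "z' a / z a = z' b / z b"
  using assms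
proof (induction "card P" arbitrary: V Q Q' P z z' rule: less_induct)
  case less
  note fin = less.prems(1) and nonneg = less.prems(2) and nonneg' = less.prems(3)
    and supp = less.prems(4) and rows = less.prems(5) and sym = less.prems(6)
    and pos = less.prems(7) and bal = less.prems(8) and bal' = less.prems(9)
    and PV = less.prems(10) and CV = less.prems(11) and dom = less.prems(12)
    and aC = less.prems(13) and bC = less.prems(14) and ab = less.prems(15)
  show ?case
  proof (cases "P = {}")
    case True
    then have "balanced V Q z'"
      using bal' rows unfolding balanced_def by (auto cong: sum.cong)
    then show ?thesis
      using balanced_ratio_eq[OF fin nonneg pos bal _ sym _ ab] CV aC by blast
  next
    case False
    then obtain p d where pP: "p \<in> P" and dV: "d \<in> V" and dp: "d \<noteq> p"
      and dom_p: "dominates (pos_edges V Q) p d C"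
      using dom by blast
    have same_edges: "pos_edges V Q' = pos_edges V Q"
      using supp unfolding pos_edges_def by auto
    interpret B: dominated_block V Q p d
      using fin nonneg sym pP PV dV dp by unfold_locales auto
    interpret B': dominated_block V Q' p d
      using fin nonneg' sym pP PV dV dp same_edges by unfold_locales auto
    have block_eq: "B'.block = B.block"
      unfolding B.block_def B'.block_def same_edges ..
    define V' where "V' = V - B.block"
    have C_block: "C \<inter> B.block = {}"
      using dom_p unfolding dominates_def B.block_def by blast
    have card_lt: "card (P - B.block) < card P"
      using B.p_in_block pP PV fin by (intro psubset_card_mono) (auto intro: finite_subset)
    have supp_red: "\<forall>u\<in>V'. \<forall>v\<in>V'. 0 < redirect B.block Q d u v \<longleftrightarrow> 0 < redirect B.block Q' d u v"
      unfolding redirect_pos_iff[OF nonneg B.finite_block] redirect_pos_iff[OF nonneg' B.finite_block]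
      using supp B.block_subset unfolding V'_def by blast
    have rows_red: "\<forall>u\<in>V' - (P - B.block). \<forall>v\<in>V'. redirect B.block Q d u v = redirect B.block Q' d u v"
      using rows B.block_subset unfolding V'_def redirect_def by (auto intro!: sum.cong) blast
    have bal_red: "balanced V' (redirect B.block Q d) z"
      unfolding V'_def using balanced_redirect[OF fin B.block_subset dV B.d_notin_block B.block_closed bal] .
    have bal_red': "balanced V' (redirect B.block Q' d) z'"
      unfolding V'_def using balanced_redirect[OF fin B'.block_subset dV B'.d_notin_block B'.block_closed bal']
      unfolding block_eq .
    have "C \<subseteq> V - B.block" "C \<noteq> {}" "P \<inter> C = {}"
      using CV C_block aC by auto
    note dom_red = B.dominators_red[OF this(1,2) PV this(3) dom, folded V'_def]
    have ab_red: "(a, b) \<in> (pos_edges V' (redirect B.block Q d))\<^sup>*"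
      using B.reach_imp_red_reach[OF ab] CV C_block aC bC unfolding V'_def by blast
    have "finite V'" and pos_red: "\<forall>v\<in>V'. 0 < z v"
      and "P - B.block \<subseteq> V'" and "C \<subseteq> V' - (P - B.block)"
      using fin pos PV CV C_block unfolding V'_def by auto
    from less.hyps[OF card_lt this(1) redirect_nonneg[OF nonneg] redirect_nonneg[OF nonneg']
        supp_red rows_red B.sym_red_reach[folded V'_def] pos_red bal_red bal_red' this(3,4)
        dom_red aC bC ab_red]
    show ?thesis .
  qed
qed

lemma dominates_if_paths_pass:
  assumes dp: "d \<noteq> p" and paths: "\<forall>c\<in>C. \<forall>xs. is_path E xs p c \<longrightarrow> d \<in> set xs"
  shows "dominates E p d C"
  unfolding dominates_def
proof (intro ballI notI)
  fix c assume c: "c \<in> C" and "(p, c) \<in> (E - UNIV \<times> {d})\<^sup>*"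
  moreover have "{(a, b). (a, b) \<in> E - UNIV \<times> {d}} = E - UNIV \<times> {d}"
    by auto
  ultimately have "(\<lambda>a b. (a, b) \<in> E - UNIV \<times> {d})\<^sup>*\<^sup>* p c"
    unfolding rtranclp_rtrancl_eq by simp
  then obtain xs where "rtrancl_path (\<lambda>a b. (a, b) \<in> E - UNIV \<times> {d}) p xs c"
    using rtranclp_eq_rtrancl_path by metis
  then obtain xs' where path: "rtrancl_path (\<lambda>a b. (a, b) \<in> E - UNIV \<times> {d}) p xs' c"
    and distinct: "distinct (p # xs')"
    using rtrancl_path_distinct by metis
  have "last (p # xs') = c"
    using path by (cases xs' rule: rev_cases) (auto dest: rtrancl_path_last elim: rtrancl_path.cases)
  moreover have "((p # xs') ! t, (p # xs') ! Suc t) \<in> E" if "Suc t < length (p # xs')" for t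
    using rtrancl_path_nth[OF path, of t] that by simp
  ultimately have "is_path E (p # xs') p c"
    unfolding is_path_def using distinct by simp
  then have "d \<in> set (p # xs')"
    using paths c by blast
  then have "d \<in> set xs'"
    using dp by simp
  then show False
    using rtrancl_path_Range[OF path] by auto
qed

section \<open>Deficiency zero\<close>

lemma equiv_linked: "equiv {..<m} (linked m R)"
proof -
  have "sym ((R \<union> R\<inverse>)\<^sup>*)"
    by (rule sym_rtrancl) (auto simp: sym_def)
  then show ?thesis
    unfolding equiv_def refl_on_def sym_def trans_def linked_def by (auto intro: rtrancl_trans)
qed

lemma connected_diff_in_stoich_space:
  "(i, j) \<in> (R \<union> R\<inverse>)\<^sup>* \<Longrightarrow> y j - y i \<in> stoich_space y R"
proof (induction rule: rtrancl_induct)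
  case base
  then show ?case
    by (simp add: stoich_space_def span_zero)
next
  case (step j k)
  have "y k - y j \<in> stoich_space y R"
  proof (cases "(j, k) \<in> R")
    case True
    then show ?thesis
      unfolding stoich_space_def by (intro span_base) blast
  next
    case False
    then have "y j - y k \<in> stoich_space y R"
      using step.hyps(2) unfolding stoich_space_def by (intro span_base) blast
    then have "- (y j - y k) \<in> stoich_space y R"
      unfolding stoich_space_def by (rule span_neg)
    then show ?thesis
      by simp
  qed
  then have "(y j - y i) + (y k - y j) \<in> stoich_space y R"
    using step.IH unfolding stoich_space_def by (rule span_add[rotated])
  then show ?case
    by simp
qed

definition linkage_rep :: "nat \<Rightarrow> (nat \<times> nat) set \<Rightarrow> nat \<Rightarrow> nat" where
  "linkage_rep m R v = Min (linked m R `` {v})"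

lemma linkage_rep_linked:
  assumes "v < m"
  shows "(v, linkage_rep m R v) \<in> linked m R"
proof -
  have "finite (linked m R `` {v})"
    by (rule finite_subset[of _ "{..<m}"]) (auto simp: linked_def)
  moreover have "v \<in> linked m R `` {v}"
    using assms equiv_linked[of m R] by (auto simp: equiv_def refl_on_def)
  ultimately show ?thesis
    unfolding linkage_rep_def using Min_in by blast
qed

lemma linkage_rep_eq:
  assumes "(v, w) \<in> linked m R"
  shows "linkage_rep m R v = linkage_rep m R w"
  unfolding linkage_rep_def using equiv_class_eq[OF equiv_linked assms] by simp

lemma linkage_rep_idem:
  assumes "v < m"
  shows "linkage_rep m R (linkage_rep m R v) = linkage_rep m R v"
  using linkage_rep_eq[OF linkage_rep_linked[OF assms]] by simp

lemma card_linkage_reps: "card {v. v < m \<and> linkage_rep m R v = v} = n_linkage m R"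
proof -
  let ?L = "linked m R"
  have class_eq: "?L `` {linkage_rep m R v} = ?L `` {v}" if "v < m" for v
    using equiv_class_eq[OF equiv_linked linkage_rep_linked[OF that]] by simp
  have Min_class: "Min (?L `` {v}) = linkage_rep m R v" for v
    unfolding linkage_rep_def ..
  have rep_lt: "linkage_rep m R v < m" if "v < m" for v
    using linkage_rep_linked[OF that] unfolding linked_def by simp
  have "inj_on Min ({..<m} // ?L)"
  proof (rule inj_onI)
    fix K K' assume "K \<in> {..<m} // ?L" "K' \<in> {..<m} // ?L" and eq: "Min K = Min K'"
    then obtain v v' where "v < m" "K = ?L `` {v}" "v' < m" "K' = ?L `` {v'}"
      by (auto elim!: quotientE)
    then show "K = K'"
      using eq class_eq Min_class by metis
  qed
  moreover have "Min ` ({..<m} // ?L) = {v. v < m \<and> linkage_rep m R v = v}"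
  proof (intro equalityI subsetI)
    fix w assume "w \<in> Min ` ({..<m} // ?L)"
    then obtain v where "v < m" "w = linkage_rep m R v"
      using Min_class by (auto elim!: quotientE)
    then show "w \<in> {v. v < m \<and> linkage_rep m R v = v}"
      using rep_lt linkage_rep_idem by simp
  next
    fix w assume "w \<in> {v. v < m \<and> linkage_rep m R v = v}"
    then have "w < m" "w = Min (?L `` {w})"
      using Min_class by simp_all
    then show "w \<in> Min ` ({..<m} // ?L)"
      by (auto intro: quotientI)
  qed
  ultimately show ?thesis
    unfolding n_linkage_def by (metis card_image)
qed

lemma span_linkage_rep_diffs:
  assumes "R \<subseteq> {..<m} \<times> {..<m}"
  shows "span ((\<lambda>v. y v - y (linkage_rep m R v)) ` {v. v < m \<and> linkage_rep m R v \<noteq> v})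
    = stoich_space y R"
proof -
  define g where "g v = y v - y (linkage_rep m R v)" for v
  have g_in: "g v \<in> stoich_space y R" if "v < m" for v
  proof -
    have "(linkage_rep m R v, v) \<in> (R \<union> R\<inverse>)\<^sup>*"
      using linkage_rep_linked[OF that] equiv_linked[of m R]
      unfolding linked_def equiv_def sym_def by blast
    then show ?thesis
      unfolding g_def by (rule connected_diff_in_stoich_space)
  qed
  have g_span: "g v \<in> span (g ` {v. v < m \<and> linkage_rep m R v \<noteq> v})" if "v < m" for v
    using that by (cases "linkage_rep m R v = v") (auto simp: g_def span_zero intro: span_base)
  have "stoich_space y R \<subseteq> span (g ` {v. v < m \<and> linkage_rep m R v \<noteq> v})"
    unfolding stoich_space_def
  proof (rule span_minimal)
    show "{y j - y i |i j. (i, j) \<in> R} \<subseteq> span (g ` {v. v < m \<and> linkage_rep m R v \<noteq> v})"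
    proof
      fix w assume "w \<in> {y j - y i |i j. (i, j) \<in> R}"
      then obtain i j where ij: "(i, j) \<in> R" "w = y j - y i"
        by blast
      then have "i < m" "j < m"
        using assms by auto
      moreover have "linkage_rep m R i = linkage_rep m R j"
        using ij \<open>i < m\<close> \<open>j < m\<close> by (intro linkage_rep_eq) (auto simp: linked_def)
      then have "w = g j - g i"
        using ij unfolding g_def by simp
      ultimately show "w \<in> span (g ` {v. v < m \<and> linkage_rep m R v \<noteq> v})"
        using g_span by (simp add: span_diff)
    qed
  qed (rule subspace_span)
  moreover have "span (g ` {v. v < m \<and> linkage_rep m R v \<noteq> v}) \<subseteq> stoich_space y R"
    unfolding stoich_space_def using g_in
    by (intro span_minimal) (auto simp: stoich_space_def subspace_span)
  ultimately show ?thesis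
    unfolding g_def by blast
qed

lemma deficiency_zero_independent_rep_diffs:
  fixes y :: "nat \<Rightarrow> real^'s::finite"
  assumes R: "R \<subseteq> {..<m} \<times> {..<m}" and def0: "deficiency m y R = 0"
  defines "g \<equiv> \<lambda>v. y v - y (linkage_rep m R v)"
    and "NR \<equiv> {v. v < m \<and> linkage_rep m R v \<noteq> v}"
  shows "inj_on g NR" and "independent (g ` NR)"
proof -
  have "NR = {..<m} - {v. v < m \<and> linkage_rep m R v = v}"
    unfolding NR_def by auto
  also have "card \<dots> = card {..<m} - card {v. v < m \<and> linkage_rep m R v = v}"
    by (rule card_Diff_subset) auto
  finally have card_NR: "card NR = m - n_linkage m R"
    by (simp add: card_linkage_reps)
  have dim_eq: "dim (stoich_space y R) = card NR"
    using def0 card_NR unfolding deficiency_def by linarith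
  have span_eq: "span (g ` NR) = stoich_space y R"
    unfolding g_def NR_def by (rule span_linkage_rep_diffs[OF R])
  have fin: "finite NR"
    unfolding NR_def by simp
  have "dim (stoich_space y R) \<le> card (g ` NR)"
    using dim_le_card[of "stoich_space y R" "g ` NR"] span_eq fin by simp
  moreover have card_le: "card (g ` NR) \<le> card NR"
    using card_image_le[OF fin] .
  ultimately have "card (g ` NR) = card NR"
    using dim_eq by linarith
  then show "inj_on g NR"
    by (rule eq_card_imp_inj_on[OF fin])
  have "g ` NR \<subseteq> stoich_space y R"
    using span_superset[of "g ` NR"] unfolding span_eq .
  moreover have "stoich_space y R \<subseteq> span (g ` NR)"
    using span_eq by simp
  moreover have "card (g ` NR) \<le> dim (stoich_space y R)"
    using card_le dim_eq by simp
  ultimately show "independent (g ` NR)"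
    by (rule card_le_dim_spanning[OF _ _ finite_imageI[OF fin]])
qed

lemma linkage_class_of_rep:
  assumes "r < m" and "linkage_rep m R r = r"
  shows "linked m R `` {r} = {v. v < m \<and> linkage_rep m R v = r}"
proof -
  have "(v, r) \<in> linked m R \<longleftrightarrow> (r, v) \<in> linked m R" for v
    using equiv_linked[of m R] unfolding equiv_def sym_def by blast
  then show ?thesis
    using assms linkage_rep_linked[of _ m R] linkage_rep_eq[of _ _ m R]
    unfolding linked_def by auto
qed

lemma sum_scaleR_linkage_rep_eq_0:
  fixes y :: "nat \<Rightarrow> 'a::real_vector"
  assumes class_sums: "\<forall>K\<in>{..<m} // linked m R. sum N K = 0"
  shows "(\<Sum>v<m. N v *\<^sub>R y (linkage_rep m R v)) = 0"
proof -
  let ?L = "linked m R" and ?rep = "linkage_rep m R"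
  define Reps where "Reps = {v. v < m \<and> ?rep v = v}"
  have "(\<Sum>v<m. N v *\<^sub>R y (?rep v)) = (\<Sum>r\<in>Reps. \<Sum>v\<in>{v \<in> {..<m}. ?rep v = r}. N v *\<^sub>R y (?rep v))"
    by (rule sum.group[symmetric]) (use linkage_rep_linked linkage_rep_idem in
        \<open>auto simp: Reps_def linked_def\<close>)
  also have "\<dots> = (\<Sum>r\<in>Reps. (\<Sum>v\<in>?L `` {r}. N v) *\<^sub>R y r)"
  proof (rule sum.cong[OF refl])
    fix r assume r: "r \<in> Reps"
    have "(\<Sum>v\<in>{v \<in> {..<m}. ?rep v = r}. N v *\<^sub>R y (?rep v))
        = (\<Sum>v\<in>{v \<in> {..<m}. ?rep v = r}. N v *\<^sub>R y r)"
      by (rule sum.cong) auto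
    also have "\<dots> = (\<Sum>v\<in>{v \<in> {..<m}. ?rep v = r}. N v) *\<^sub>R y r"
      by (rule scaleR_sum_left[symmetric])
    finally show "(\<Sum>v\<in>{v \<in> {..<m}. ?rep v = r}. N v *\<^sub>R y (?rep v)) = (\<Sum>v\<in>?L `` {r}. N v) *\<^sub>R y r"
      using linkage_class_of_rep[of r m R] r unfolding Reps_def by simp
  qed
  also have "\<dots> = 0"
  proof (rule sum.neutral, rule ballI)
    fix r assume "r \<in> Reps"
    then have "?L `` {r} \<in> {..<m} // ?L"
      unfolding Reps_def by (auto intro: quotientI)
    then show "(\<Sum>v\<in>?L `` {r}. N v) *\<^sub>R y r = 0"
      using class_sums by simp
  qed
  finally show ?thesis .
qed

lemma independent_image_sum_eq_0:
  fixes g :: "'b \<Rightarrow> 'a::real_vector"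
  assumes "finite A" and "inj_on g A" and "independent (g ` A)"
    and "(\<Sum>v\<in>A. c v *\<^sub>R g v) = 0" and "v \<in> A"
  shows "c v = 0"
proof -
  have "(\<Sum>w\<in>g ` A. c (the_inv_into A g w) *\<^sub>R w) = 0"
    using assms(2,4) by (simp add: sum.reindex the_inv_into_f_f)
  from independentD[OF assms(3) finite_imageI[OF assms(1)] order.refl this imageI[OF assms(5)]]
  have "c (the_inv_into A g (g v)) = 0"
    by simp
  then show ?thesis
    using the_inv_into_f_f[OF assms(2,5)] by simp
qed

lemma deficiency_zero_kernel:
  fixes y :: "nat \<Rightarrow> real^'s::finite"
  assumes R: "R \<subseteq> {..<m} \<times> {..<m}" and def0: "deficiency m y R = 0"
    and class_sums: "\<forall>K\<in>{..<m} // linked m R. sum N K = 0"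
    and combination: "(\<Sum>v<m. N v *\<^sub>R y v) = 0"
    and "v < m"
  shows "N v = 0"
proof -
  let ?rep = "linkage_rep m R"
  define g where "g = (\<lambda>v. y v - y (?rep v))"
  define NR where "NR = {v. v < m \<and> ?rep v \<noteq> v}"
  have "(\<Sum>v<m. N v *\<^sub>R g v) = 0"
    using combination sum_scaleR_linkage_rep_eq_0[OF class_sums, of y]
    unfolding g_def by (simp add: scaleR_diff_right sum_subtractf)
  moreover have "(\<Sum>v<m. N v *\<^sub>R g v) = (\<Sum>v\<in>NR. N v *\<^sub>R g v)"
    unfolding NR_def g_def by (intro sum.mono_neutral_right) auto
  ultimately have NR_zero: "N w = 0" if "w \<in> NR" for w
    using independent_image_sum_eq_0[of NR g, OF _ _ _ _ that]
      deficiency_zero_independent_rep_diffs[OF R def0, folded g_def NR_def]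
    unfolding NR_def by simp
  show ?thesis
  proof (cases "v \<in> NR")
    case False
    then have class_v: "linked m R `` {v} = {w. w < m \<and> ?rep w = v}"
      using linkage_class_of_rep \<open>v < m\<close> unfolding NR_def by simp
    have "linked m R `` {v} \<in> {..<m} // linked m R"
      using \<open>v < m\<close> by (simp add: quotientI)
    then have "0 = sum N (linked m R `` {v})"
      using class_sums by simp
    also have "\<dots> = N v + sum N (linked m R `` {v} - {v})"
      by (rule sum.remove) (use False \<open>v < m\<close> in \<open>simp_all add: class_v NR_def\<close>)
    also have "sum N (linked m R `` {v} - {v}) = 0"
      using NR_zero unfolding class_v NR_def by (intro sum.neutral) auto
    finally show ?thesis
      by simp
  qed (rule NR_zero)
qed

lemma sum_flux_eq_net_inflow:
  fixes y :: "nat \<Rightarrow> 'a::real_vector"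
  shows "(\<Sum>u<m. \<Sum>v<m. F u v *\<^sub>R (y v - y u)) =
         (\<Sum>v<m. ((\<Sum>u<m. F u v) - (\<Sum>w<m. F v w)) *\<^sub>R y v)"
proof -
  have "(\<Sum>u<m. \<Sum>v<m. F u v *\<^sub>R (y v - y u)) =
        (\<Sum>u<m. \<Sum>v<m. F u v *\<^sub>R y v) - (\<Sum>u<m. \<Sum>v<m. F u v *\<^sub>R y u)"
    by (simp add: scaleR_diff_right sum_subtractf)
  also have "(\<Sum>u<m. \<Sum>v<m. F u v *\<^sub>R y v) = (\<Sum>v<m. (\<Sum>u<m. F u v) *\<^sub>R y v)"
    by (subst sum.swap) (simp add: scaleR_sum_left)
  also have "(\<Sum>u<m. \<Sum>v<m. F u v *\<^sub>R y u) = (\<Sum>v<m. (\<Sum>w<m. F v w) *\<^sub>R y v)"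
    by (simp add: scaleR_sum_left)
  finally show ?thesis
    by (simp add: scaleR_diff_left sum_subtractf)
qed

lemma deficiency_zero_flux_balanced:
  fixes y :: "nat \<Rightarrow> real^'s::finite"
  assumes R: "R \<subseteq> {..<m} \<times> {..<m}" and def0: "deficiency m y R = 0"
    and supp: "\<forall>u v. F u v \<noteq> 0 \<longrightarrow> (u, v) \<in> R"
    and zero: "(\<Sum>u<m. \<Sum>v<m. F u v *\<^sub>R (y v - y u)) = 0"
    and "v < m"
  shows "(\<Sum>w<m. F v w) = (\<Sum>u<m. F u v)"
proof -
  define N where "N v = (\<Sum>u<m. F u v) - (\<Sum>w<m. F v w)" for v
  have class_sum: "sum N K = 0" if K: "K \<in> {..<m} // linked m R" for K
  proof -
    have K_sub: "K \<subseteq> {..<m}"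
      using in_quotient_imp_subset[OF equiv_linked K] .
    have closed: "u \<in> K \<longleftrightarrow> v \<in> K" if "(u, v) \<in> R" for u v
    proof -
      have "(u, v) \<in> linked m R" "(v, u) \<in> linked m R"
        using that R unfolding linked_def by (auto intro: converse_rtrancl_into_rtrancl)
      then show ?thesis
        using in_quotient_imp_closed[OF equiv_linked K] by blast
    qed
    have across: "F u v = 0" if "(u \<in> K) \<noteq> (v \<in> K)" for u v
      using supp closed that by blast
    have inflow: "(\<Sum>u<m. F u v) = (\<Sum>u\<in>K. F u v)" if "v \<in> K" for v
      by (rule sum.mono_neutral_right) (use K_sub across that in auto)
    have outflow: "(\<Sum>w<m. F v w) = (\<Sum>w\<in>K. F v w)" if "v \<in> K" for v
      by (rule sum.mono_neutral_right) (use K_sub across that in auto)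
    have "sum N K = (\<Sum>v\<in>K. \<Sum>u\<in>K. F u v) - (\<Sum>v\<in>K. \<Sum>w\<in>K. F v w)"
      unfolding N_def using inflow outflow by (simp add: sum_subtractf)
    also have "\<dots> = 0"
      by (subst sum.swap) simp
    finally show ?thesis .
  qed
  have "(\<Sum>v<m. N v *\<^sub>R y v) = 0"
    using zero sum_flux_eq_net_inflow[of F y m] unfolding N_def by simp
  then have "N v = 0"
    using deficiency_zero_kernel[OF R def0 ballI[OF class_sum] _ \<open>v < m\<close>] by simp
  then show ?thesis
    unfolding N_def by simp
qed

lemma deficiency_zero_flux_zero_iff_balanced:
  fixes y :: "nat \<Rightarrow> real^'s::finite"
  assumes R: "R \<subseteq> {..<m} \<times> {..<m}" and def0: "deficiency m y R = 0"
    and supp: "\<forall>u v. Q u v * z u \<noteq> 0 \<longrightarrow> (u, v) \<in> R"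
  shows "(\<Sum>u<m. \<Sum>v<m. (Q u v * z u) *\<^sub>R (y v - y u)) = 0 \<longleftrightarrow> balanced {..<m} Q z"
proof
  assume "(\<Sum>u<m. \<Sum>v<m. (Q u v * z u) *\<^sub>R (y v - y u)) = 0"
  from deficiency_zero_flux_balanced[OF R def0 supp this]
  show "balanced {..<m} Q z"
    unfolding balanced_def by (simp add: sum_distrib_left algebra_simps)
next
  assume "balanced {..<m} Q z"
  then have "\<forall>v<m. (\<Sum>u<m. Q u v * z u) - (\<Sum>w<m. Q v w * z v) = 0"
    unfolding balanced_def by (simp add: sum_distrib_left algebra_simps)
  then show "(\<Sum>u<m. \<Sum>v<m. (Q u v * z u) *\<^sub>R (y v - y u)) = 0"
    using sum_flux_eq_net_inflow[of "\<lambda>u v. Q u v * z u" y m] by simp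
qed

section \<open>Mass action systems and their translations\<close>

lemma gma_rhs_eq_sum_reaction_vectors:
  fixes y yK :: "nat \<Rightarrow> real^'s::finite"
  assumes no_loops: "\<forall>i. k i i = 0"
  shows "gma_rhs m y yK k x = (\<Sum>l<m. Psi yK x l *\<^sub>R (\<Sum>j<m. k l j *\<^sub>R (y j - y l)))"
proof (rule vec_eq_iff[THEN iffD2], rule allI)
  fix s
  have col: "(\<Sum>i<m. A_mat m k i l * (y i $ s)) = (\<Sum>j<m. k l j * (y j $ s - y l $ s))"
    if "l < m" for l
  proof -
    have "(\<Sum>i<m. A_mat m k i l * (y i $ s))
        = (\<Sum>i<m. k l i * (y i $ s)) - (\<Sum>i<m. if i = l then (\<Sum>j<m. k l j) * (y i $ s) else 0)"
      unfolding sum_subtractf[symmetric] by (rule sum.cong) (auto simp: A_mat_def no_loops)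
    also have "\<dots> = (\<Sum>j<m. k l j * (y j $ s - y l $ s))"
      using that by (simp add: right_diff_distrib sum_subtractf sum_distrib_right)
    finally show ?thesis .
  qed
  have "gma_rhs m y yK k x $ s = (\<Sum>l<m. Psi yK x l * (\<Sum>i<m. A_mat m k i l * (y i $ s)))"
    unfolding gma_rhs_def by (simp add: sum_distrib_left sum_distrib_right algebra_simps)
      (subst sum.swap, simp)
  also have "\<dots> = (\<Sum>l<m. Psi yK x l * (\<Sum>j<m. k l j * (y j $ s - y l $ s)))"
    using col by simp
  also have "\<dots> = (\<Sum>l<m. Psi yK x l *\<^sub>R (\<Sum>j<m. k l j *\<^sub>R (y j - y l))) $ s"
    by (simp add: sum_component)
  finally show "gma_rhs m y yK k x $ s = (\<Sum>l<m. Psi yK x l *\<^sub>R (\<Sum>j<m. k l j *\<^sub>R (y j - y l))) $ s" .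
qed

definition ln_vec :: "real^'s::finite \<Rightarrow> real^'s" where
  "ln_vec x = (\<chi> s. ln (x $ s))"

lemma Psi_eq_exp_inner:
  fixes yK :: "nat \<Rightarrow> real^'s::finite"
  assumes "\<forall>s. 0 < x $ s"
  shows "Psi yK x i = exp (yK i \<bullet> ln_vec x)"
proof -
  have "Psi yK x i = (\<Prod>s\<in>UNIV. exp (yK i $ s * ln (x $ s)))"
    unfolding Psi_def using assms by (intro prod.cong) (auto simp: powr_def less_imp_neq[symmetric])
  also have "\<dots> = exp (\<Sum>s\<in>UNIV. yK i $ s * ln (x $ s))"
    by (simp add: exp_sum)
  finally show ?thesis
    unfolding ln_vec_def inner_vec_def by simp
qed

lemma steady_states_iff_balanced:
  fixes yt ytK :: "nat \<Rightarrow> real^'s::finite"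
  assumes crn: "crn mt yt Rt" and rw: "rw_set Rt Kt" and def0: "deficiency mt yt Rt = 0"
  shows "x \<in> steady_states mt yt ytK Kt \<longleftrightarrow> (\<forall>s. 0 < x $ s) \<and> balanced {..<mt} Kt (Psi ytK x)"
proof -
  have R: "Rt \<subseteq> {..<mt} \<times> {..<mt}" and "\<forall>i. (i, i) \<notin> Rt"
    using crn unfolding crn_def by blast+
  then have "\<forall>i. Kt i i = 0"
    using rw unfolding rw_set_def by blast
  then have "gma_rhs mt yt ytK Kt x = (\<Sum>u<mt. \<Sum>v<mt. (Kt u v * Psi ytK x u) *\<^sub>R (yt v - yt u))"
    by (simp add: gma_rhs_eq_sum_reaction_vectors scaleR_sum_right mult.commute)
  moreover have "\<forall>u v. Kt u v * Psi ytK x u \<noteq> 0 \<longrightarrow> (u, v) \<in> Rt"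
    using rw unfolding rw_set_def by fastforce
  ultimately show ?thesis
    unfolding steady_states_def using deficiency_zero_flux_zero_iff_balanced[OF R def0] by auto
qed

lemma sym_rtrancl_if_weakly_reversible:
  assumes wr: "weakly_reversible m R" and R: "R \<subseteq> {..<m} \<times> {..<m}"
  shows "sym (R\<^sup>*)"
  unfolding sym_def
proof (intro allI impI)
  fix u v assume uv: "(u, v) \<in> R\<^sup>*"
  show "(v, u) \<in> R\<^sup>*"
  proof (cases "u = v")
    case False
    have "u < m"
      using uv False R by (cases rule: converse_rtranclE) auto
    moreover have "v < m"
      using uv False R by (cases rule: rtranclE) auto
    moreover have "sym ((R \<union> R\<inverse>)\<^sup>*)"
      by (rule sym_rtrancl) (auto simp: sym_def)
    then have "(v, u) \<in> (R \<union> R\<inverse>)\<^sup>*"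
      using rtrancl_mono[of R "R \<union> R\<inverse>"] uv unfolding sym_def by blast
    ultimately show ?thesis
      using wr unfolding weakly_reversible_def linked_def by blast
  qed simp
qed

locale reaction_translation =
  fixes m mt :: nat and y yt ytK :: "nat \<Rightarrow> real^'s::finite"
    and R Rt :: "(nat \<times> nat) set" and k bt lam :: "nat \<Rightarrow> nat \<Rightarrow> real" and h hK :: "nat \<Rightarrow> nat"
  assumes crn: "crn m y R" and rw: "rw_set R k"
    and translation: "rw_translation m y R k mt yt ytK Rt bt h hK lam"
    and deficiency_zero: "deficiency mt yt Rt = 0"
begin

abbreviation relevant :: "nat set" where
  "relevant \<equiv> kin_rel m y k"

abbreviation relevant_t :: "nat set" where
  "relevant_t \<equiv> kin_rel mt yt bt"

lemma
  shows crn_t: "crn mt yt Rt" and rw_t: "rw_set Rt bt" and h_image: "h ` relevant = relevant_t"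
    and lam_nonneg: "i \<in> relevant \<Longrightarrow> 0 \<le> lam i j"
    and bt_eq_sum_lam: "u \<in> relevant_t \<Longrightarrow> (\<Sum>i\<in>{i \<in> relevant. h i = u}. lam i v) = bt u v"
    and reaction_vector_eq: "i \<in> relevant \<Longrightarrow>
      (\<Sum>j\<in>{..<m} - {i}. k i j *\<^sub>R (y j - y i)) = (\<Sum>j\<in>{..<mt} - {h i}. lam i j *\<^sub>R (yt j - yt (h i)))"
    and hK_relevant: "u \<in> relevant_t \<Longrightarrow> hK u \<in> relevant"
    and h_hK: "u \<in> relevant_t \<Longrightarrow> h (hK u) = u"
    and ytK_eq: "u \<in> relevant_t \<Longrightarrow> ytK u = y (hK u)"
  using translation unfolding rw_translation_def by auto

lemma Rt_bounded: "Rt \<subseteq> {..<mt} \<times> {..<mt}"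
  using crn_t unfolding crn_def by blast

lemma relevant_bounded: "relevant \<subseteq> {..<m}" and relevant_t_bounded: "relevant_t \<subseteq> {..<mt}"
  unfolding kin_rel_def by auto

lemma bt_nonneg: "0 \<le> bt u v"
  using rw_t unfolding rw_set_def by (metis less_eq_real_def)

lemma bt_pos_iff: "0 < bt u v \<longleftrightarrow> (u, v) \<in> Rt"
  using rw_t unfolding rw_set_def by blast

text \<open>If u were not kinetically relevant, the reactions leaving it would have zero net reaction
  vector, and deficiency zero would force their total weight to vanish.\<close>

lemma source_relevant_t:
  assumes uv: "(u, v) \<in> Rt"
  shows "u \<in> relevant_t"
proof (rule ccontr)
  assume irrelevant: "u \<notin> relevant_t"
  have u: "u < mt"
    using uv Rt_bounded by auto
  define F where "F a b = (if a = u then bt u b else 0)" for a b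
  have F_supp: "\<forall>a b. F a b \<noteq> 0 \<longrightarrow> (a, b) \<in> Rt"
    unfolding F_def using bt_pos_iff bt_nonneg by (metis less_eq_real_def)
  have "(\<Sum>b<mt. F a b *\<^sub>R (yt b - yt a)) = (if a = u then (\<Sum>b<mt. bt u b *\<^sub>R (yt b - yt u)) else 0)"
    for a
    unfolding F_def by simp
  then have "(\<Sum>a<mt. \<Sum>b<mt. F a b *\<^sub>R (yt b - yt a)) = (\<Sum>b<mt. bt u b *\<^sub>R (yt b - yt u))"
    using u by simp
  also have "\<dots> = (\<Sum>j\<in>{..<mt} - {u}. bt u j *\<^sub>R (yt j - yt u))"
    using u by (subst sum.remove[of _ u]) auto
  also have "\<dots> = 0"
    using irrelevant u unfolding kin_rel_def by auto
  finally have "(\<Sum>w<mt. F u w) = (\<Sum>a<mt. F a u)"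
    by (rule deficiency_zero_flux_balanced[OF Rt_bounded deficiency_zero F_supp _ u])
  moreover have "(\<Sum>a<mt. F a u) = 0"
  proof -
    have "bt u u = 0"
      using crn_t rw_t unfolding crn_def rw_set_def by blast
    then show ?thesis
      using u unfolding F_def by simp
  qed
  ultimately have "(\<Sum>w<mt. bt u w) = 0"
    unfolding F_def by simp
  then have "bt u v = 0"
    using sum_nonneg_eq_0_iff[of "{..<mt}" "bt u"] bt_nonneg uv Rt_bounded by auto
  then show False
    using bt_pos_iff[of u v] uv by simp
qed

definition fibre :: "nat \<Rightarrow> nat set" where
  "fibre u = {i \<in> relevant. h i = u}"

lemma finite_fibre: "finite (fibre u)"
  unfolding fibre_def by (rule finite_subset[of _ "{..<m}"]) (use relevant_bounded in auto)

lemma fibre_empty: "u \<notin> relevant_t \<Longrightarrow> fibre u = {}"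
  unfolding fibre_def using h_image by auto

lemma fibre_singleton:
  assumes "u \<in> relevant_t" and "u \<notin> C_I relevant h"
  shows "fibre u = {hK u}"
  using assms hK_relevant h_hK unfolding fibre_def C_I_def by blast

text \<open>Pushing the mass action flux of the complexes i with h i = u forward along h gives the
  reactions of the translation leaving u these state-dependent rates.\<close>

definition effective_rate :: "real^'s \<Rightarrow> nat \<Rightarrow> nat \<Rightarrow> real" where
  "effective_rate x u v = (\<Sum>i\<in>fibre u. lam i v * exp ((y i - ytK u) \<bullet> ln_vec x))"

lemma effective_rate_nonneg: "0 \<le> effective_rate x u v"
  unfolding effective_rate_def fibre_def using lam_nonneg by (auto intro!: sum_nonneg)

lemma effective_rate_pos_iff: "0 < effective_rate x u v \<longleftrightarrow> (u, v) \<in> Rt"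
proof (cases "u \<in> relevant_t")
  case True
  have "0 < effective_rate x u v \<longleftrightarrow> (\<exists>i\<in>fibre u. 0 < lam i v)"
    unfolding effective_rate_def using sum_pos_iff_ex_pos[OF finite_fibre] lam_nonneg
    by (simp add: fibre_def zero_less_mult_iff)
  also have "\<dots> \<longleftrightarrow> 0 < bt u v"
    using sum_pos_iff_ex_pos[OF finite_fibre[of u], of "\<lambda>i. lam i v"] lam_nonneg bt_eq_sum_lam[OF True]
    unfolding fibre_def by simp
  finally show ?thesis
    using bt_pos_iff by simp
qed (use fibre_empty source_relevant_t in \<open>auto simp: effective_rate_def\<close>)

lemma rw_set_effective_rate: "rw_set Rt (effective_rate x)"
  unfolding rw_set_def using effective_rate_pos_iff effective_rate_nonneg by (metis less_eq_real_def)

lemma effective_rate_eq_bt: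
  assumes "u \<notin> C_I relevant h"
  shows "effective_rate x u v = bt u v"
proof (cases "u \<in> relevant_t")
  case True
  then show ?thesis
    using fibre_singleton[OF True assms] bt_eq_sum_lam[OF True] ytK_eq[OF True]
    unfolding effective_rate_def fibre_def by simp
next
  case False
  then have "(u, v) \<notin> Rt"
    using source_relevant_t by blast
  then show ?thesis
    using False fibre_empty rw_t unfolding effective_rate_def rw_set_def by simp
qed

lemma original_rhs_eq_effective_flux:
  assumes pos: "\<forall>s. 0 < x $ s"
  shows "gma_rhs m y y k x = (\<Sum>u<mt. \<Sum>v<mt. (effective_rate x u v * Psi ytK x u) *\<^sub>R (yt v - yt u))"
proof -
  have no_loops: "\<forall>i. k i i = 0"
    using crn rw unfolding crn_def rw_set_def by blast
  have Psi_split: "Psi y x i = exp ((y i - ytK u) \<bullet> ln_vec x) * Psi ytK x u" for i u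
    unfolding Psi_eq_exp_inner[OF pos] by (simp add: inner_diff_left exp_diff)
  have full_sum: "(\<Sum>j<m. k l j *\<^sub>R (y j - y l)) = (\<Sum>j\<in>{..<m} - {l}. k l j *\<^sub>R (y j - y l))"
    if "l < m" for l
    using that by (subst sum.remove[of _ l]) auto
  have "gma_rhs m y y k x = (\<Sum>l<m. Psi y x l *\<^sub>R (\<Sum>j<m. k l j *\<^sub>R (y j - y l)))"
    by (rule gma_rhs_eq_sum_reaction_vectors[of k, OF no_loops])
  also have "\<dots> = (\<Sum>l\<in>relevant. Psi y x l *\<^sub>R (\<Sum>j<m. k l j *\<^sub>R (y j - y l)))"
    by (rule sum.mono_neutral_right)
      (use relevant_bounded full_sum in \<open>auto simp: kin_rel_def\<close>)
  also have "\<dots> = (\<Sum>l\<in>relevant. \<Sum>v<mt. (lam l v * Psi y x l) *\<^sub>R (yt v - yt (h l)))"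
  proof (rule sum.cong[OF refl])
    fix l assume l: "l \<in> relevant"
    have hl: "h l < mt"
      using h_image relevant_t_bounded l by auto
    have "(\<Sum>j<m. k l j *\<^sub>R (y j - y l)) = (\<Sum>j<mt. lam l j *\<^sub>R (yt j - yt (h l)))"
      using full_sum[of l] reaction_vector_eq[OF l] relevant_bounded l hl
      by (subst sum.remove[of _ "h l"]) auto
    then show "Psi y x l *\<^sub>R (\<Sum>j<m. k l j *\<^sub>R (y j - y l))
        = (\<Sum>v<mt. (lam l v * Psi y x l) *\<^sub>R (yt v - yt (h l)))"
      by (simp add: scaleR_sum_right mult.commute)
  qed
  also have "\<dots> = (\<Sum>u<mt. \<Sum>l\<in>fibre u. \<Sum>v<mt. (lam l v * Psi y x l) *\<^sub>R (yt v - yt (h l)))"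
    unfolding fibre_def using h_image relevant_t_bounded relevant_bounded
    by (intro sum.group[symmetric]) (auto intro: finite_subset)
  also have "\<dots> = (\<Sum>u<mt. \<Sum>v<mt. (effective_rate x u v * Psi ytK x u) *\<^sub>R (yt v - yt u))"
  proof (rule sum.cong[OF refl])
    fix u
    have "(\<Sum>l\<in>fibre u. \<Sum>v<mt. (lam l v * Psi y x l) *\<^sub>R (yt v - yt (h l)))
        = (\<Sum>v<mt. (\<Sum>l\<in>fibre u. lam l v * Psi y x l) *\<^sub>R (yt v - yt u))"
      unfolding fibre_def by (subst sum.swap) (simp add: scaleR_sum_left)
    also have "\<dots> = (\<Sum>v<mt. (effective_rate x u v * Psi ytK x u) *\<^sub>R (yt v - yt u))"
      unfolding effective_rate_def Psi_split[of _ u] by (simp add: sum_distrib_right mult.assoc)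
    finally show "(\<Sum>l\<in>fibre u. \<Sum>v<mt. (lam l v * Psi y x l) *\<^sub>R (yt v - yt (h l)))
        = (\<Sum>v<mt. (effective_rate x u v * Psi ytK x u) *\<^sub>R (yt v - yt u))" .
  qed
  finally show ?thesis .
qed

lemma steady_states_iff_balanced_effective:
  "x \<in> steady_states m y y k \<longleftrightarrow> (\<forall>s. 0 < x $ s) \<and> balanced {..<mt} (effective_rate x) (Psi ytK x)"
proof -
  have "\<forall>u v. effective_rate x u v * Psi ytK x u \<noteq> 0 \<longrightarrow> (u, v) \<in> Rt"
    using effective_rate_pos_iff effective_rate_nonneg by (metis less_eq_real_def mult_eq_0_iff)
  then show ?thesis
    using original_rhs_eq_effective_flux
      deficiency_zero_flux_zero_iff_balanced[OF Rt_bounded deficiency_zero]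
    unfolding steady_states_def by auto
qed

end

locale resolvable_translation = reaction_translation +
  fixes CR :: "nat set"
  assumes weakly_reversible: "weakly_reversible mt Rt"
    and resolving: "resolving_set mt Rt (kin_rel mt yt bt) y (kin_rel m y k) h hK CR"
    and resolving_disjoint: "C_I (kin_rel m y k) h \<inter> CR = {}"
    and paths_through: "\<forall>p\<in>C_I (kin_rel m y k) h. \<exists>d\<in>kin_rel mt yt bt. d \<noteq> p \<and>
           (\<forall>c\<in>CR. \<forall>xs. is_path Rt xs p c \<longrightarrow> d \<in> set xs)"
begin

definition admissible :: "(nat \<Rightarrow> nat \<Rightarrow> real) \<Rightarrow> bool" where
  "admissible Q \<longleftrightarrow> rw_set Rt Q \<and> (\<forall>u v. u \<notin> C_I relevant h \<longrightarrow> Q u v = bt u v)"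

lemma admissible_bt: "admissible bt"
  unfolding admissible_def using rw_t by simp

lemma admissible_effective_rate: "admissible (effective_rate x)"
  unfolding admissible_def using rw_set_effective_rate effective_rate_eq_bt by simp

lemma resolving_subset: "CR \<subseteq> relevant_t"
  using resolving unfolding resolving_set_def by blast

lemma C_I_subset: "C_I relevant h \<subseteq> relevant_t"
  using h_image unfolding C_I_def by blast

lemma log_ratio_eq_on_resolving:
  assumes Q1: "admissible Q1" and Q2: "admissible Q2"
    and pos: "\<forall>s. 0 < x1 $ s" "\<forall>s. 0 < x2 $ s"
    and bal: "balanced {..<mt} Q1 (Psi ytK x1)" "balanced {..<mt} Q2 (Psi ytK x2)"
    and ab: "a \<in> CR" "b \<in> CR" "(a, b) \<in> Rt\<^sup>*"
  shows "ytK a \<bullet> (ln_vec x2 - ln_vec x1) = ytK b \<bullet> (ln_vec x2 - ln_vec x1)"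
proof -
  have nonneg: "\<forall>u v. 0 \<le> Q u v" if "admissible Q" for Q
    using that unfolding admissible_def rw_set_def by (metis less_eq_real_def)
  have edges: "pos_edges {..<mt} Q = Rt" if "admissible Q" for Q
    using that Rt_bounded unfolding admissible_def rw_set_def pos_edges_def by auto
  have dominated: "\<forall>p\<in>C_I relevant h. \<exists>d\<in>{..<mt}. d \<noteq> p \<and> dominates Rt p d CR"
  proof
    fix p assume "p \<in> C_I relevant h"
    then obtain d where "d \<in> relevant_t" "d \<noteq> p" "\<forall>c\<in>CR. \<forall>xs. is_path Rt xs p c \<longrightarrow> d \<in> set xs"
      using paths_through by blast
    then show "\<exists>d\<in>{..<mt}. d \<noteq> p \<and> dominates Rt p d CR"
      using dominates_if_paths_pass relevant_t_bounded by blast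
  qed
  have supp: "\<forall>u\<in>{..<mt}. \<forall>v\<in>{..<mt}. 0 < Q1 u v \<longleftrightarrow> 0 < Q2 u v"
    using Q1 Q2 unfolding admissible_def rw_set_def by blast
  have rows: "\<forall>u\<in>{..<mt} - C_I relevant h. \<forall>v\<in>{..<mt}. Q1 u v = Q2 u v"
    using Q1 Q2 unfolding admissible_def by simp
  have Psi_pos: "\<forall>v\<in>{..<mt}. 0 < Psi ytK x1 v"
    using Psi_eq_exp_inner[OF pos(1)] by simp
  have subsets: "C_I relevant h \<subseteq> {..<mt}" "CR \<subseteq> {..<mt} - C_I relevant h"
    using C_I_subset resolving_subset relevant_t_bounded resolving_disjoint by blast+
  note sym = sym_rtrancl_if_weakly_reversible[OF weakly_reversible Rt_bounded]
  from balanced_ratio_eq_dominated[OF finite_lessThan nonneg[OF Q1] nonneg[OF Q2] supp rows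
      sym[folded edges[OF Q1]] Psi_pos bal subsets dominated[folded edges[OF Q1]] ab(1,2)
      ab(3)[folded edges[OF Q1]]]
  have "Psi ytK x2 a / Psi ytK x1 a = Psi ytK x2 b / Psi ytK x1 b" .
  then have "exp (ytK a \<bullet> ln_vec x2 - ytK a \<bullet> ln_vec x1) = exp (ytK b \<bullet> ln_vec x2 - ytK b \<bullet> ln_vec x1)"
    unfolding Psi_eq_exp_inner[OF pos(1)] Psi_eq_exp_inner[OF pos(2)] exp_diff .
  then show ?thesis
    by (simp add: inner_diff_right)
qed

text \<open>The resolving set writes each difference y j - y i within a fibre as a combination of
  differences of kinetic complexes in CR lying in one linkage class, on which
  log_ratio_eq_on_resolving makes the log-ratio constant.\<close>

lemma fibre_orthogonal_log_ratio:
  assumes const: "\<And>a b. a \<in> CR \<Longrightarrow> b \<in> CR \<Longrightarrow> (a, b) \<in> Rt\<^sup>* \<Longrightarrow> ytK a \<bullet> \<Delta> = ytK b \<bullet> \<Delta>"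
    and u: "u \<in> relevant_t" and i: "i \<in> fibre u"
  shows "(y i - ytK u) \<bullet> \<Delta> = 0"
proof (cases "u \<in> C_I relevant h")
  case False
  then show ?thesis
    using fibre_singleton[OF u False] ytK_eq[OF u] i by simp
next
  case True
  have i': "i \<in> relevant" "h i = u"
    using i unfolding fibre_def by auto
  obtain c where c_eq: "y (hK u) - y i = (\<Sum>(a, b)\<in>{(a, b). a < b \<and> b < mt}. c a b *\<^sub>R (y (hK b) - y (hK a)))"
    and c_supp: "\<forall>a b. a < b \<and> c a b \<noteq> 0 \<longrightarrow> (a, b) \<in> linked mt Rt \<and> a \<in> CR \<and> b \<in> CR"
    using resolving True i' hK_relevant[OF u] h_hK[OF u] unfolding resolving_set_def by blast
  have "(c a b *\<^sub>R (y (hK b) - y (hK a))) \<bullet> \<Delta> = 0" if "a < b" for a b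
  proof (cases "c a b = 0")
    case False
    then have "(a, b) \<in> Rt\<^sup>*" "a \<in> CR" "b \<in> CR"
      using c_supp that weakly_reversible unfolding weakly_reversible_def by blast+
    then show ?thesis
      using const resolving_subset ytK_eq by (simp add: inner_diff_left) (metis subsetD)
  qed simp
  then have "(y (hK u) - y i) \<bullet> \<Delta> = 0"
    unfolding c_eq inner_sum_left by (intro sum.neutral) auto
  then show ?thesis
    using ytK_eq[OF u] by (simp add: inner_diff_left)
qed

lemma effective_rate_invariant:
  assumes "admissible Q1" and "admissible Q2"
    and pos: "\<forall>s. 0 < x1 $ s" "\<forall>s. 0 < x2 $ s"
    and "balanced {..<mt} Q1 (Psi ytK x1)" and "balanced {..<mt} Q2 (Psi ytK x2)"
  shows "effective_rate x1 = effective_rate x2"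
proof (intro ext)
  fix u v
  define \<Delta> where "\<Delta> = ln_vec x2 - ln_vec x1"
  have "(y i - ytK u) \<bullet> ln_vec x1 = (y i - ytK u) \<bullet> ln_vec x2" if "i \<in> fibre u" for i
  proof -
    have "u \<in> relevant_t"
      using that fibre_empty by blast
    then have "(y i - ytK u) \<bullet> \<Delta> = 0"
      using fibre_orthogonal_log_ratio[OF _ _ that] log_ratio_eq_on_resolving[OF assms]
      unfolding \<Delta>_def by blast
    then show ?thesis
      unfolding \<Delta>_def by (simp add: inner_diff_right)
  qed
  then show "effective_rate x1 u v = effective_rate x2 u v"
    unfolding effective_rate_def by (intro sum.cong) auto
qed

lemma steady_state_resolvable:
  "\<exists>Kt. rw_set Rt Kt \<and> steady_states m y y k = steady_states mt yt ytK Kt"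
proof -
  have translated: "x \<in> steady_states mt yt ytK Q \<longleftrightarrow> (\<forall>s. 0 < x $ s) \<and> balanced {..<mt} Q (Psi ytK x)"
    if "admissible Q" for Q x
    using steady_states_iff_balanced[OF crn_t _ deficiency_zero] that unfolding admissible_def by blast
  note original = steady_states_iff_balanced_effective
  show ?thesis
  proof (cases "steady_states m y y k = {}")
    case False
    then obtain x0 where "x0 \<in> steady_states m y y k"
      by blast
    then have x0: "\<forall>s. 0 < x0 $ s" "balanced {..<mt} (effective_rate x0) (Psi ytK x0)"
      unfolding original by blast+
    note invariant = effective_rate_invariant[OF admissible_effective_rate _ x0(1) _ x0(2)]
    have "steady_states m y y k = steady_states mt yt ytK (effective_rate x0)"
    proof (intro set_eqI iffI)
      fix x assume "x \<in> steady_states m y y k"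
      then show "x \<in> steady_states mt yt ytK (effective_rate x0)"
        unfolding original translated[OF admissible_effective_rate]
        using invariant[OF admissible_effective_rate] by metis
    next
      fix x assume "x \<in> steady_states mt yt ytK (effective_rate x0)"
      then show "x \<in> steady_states m y y k"
        unfolding original translated[OF admissible_effective_rate]
        using invariant[OF admissible_effective_rate] by metis
    qed
    then show ?thesis
      using rw_set_effective_rate by blast
  next
    case no_original: True
    show ?thesis
    proof (cases "steady_states mt yt ytK bt = {}")
      case True
      then show ?thesis
        using no_original rw_t by auto
    next
      case False
      then obtain x1 where "x1 \<in> steady_states mt yt ytK bt"
        by blast
      then have x1: "\<forall>s. 0 < x1 $ s" "balanced {..<mt} bt (Psi ytK x1)"
        unfolding translated[OF admissible_bt] by blast+
      have "x \<notin> steady_states mt yt ytK (effective_rate x1)" for x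
      proof
        assume "x \<in> steady_states mt yt ytK (effective_rate x1)"
        then have "\<forall>s. 0 < x $ s" "balanced {..<mt} (effective_rate x1) (Psi ytK x)"
          unfolding translated[OF admissible_effective_rate] by blast+
        moreover have "effective_rate x1 = effective_rate x"
          using effective_rate_invariant[OF admissible_bt admissible_effective_rate x1(1) _ x1(2)]
            calculation by blast
        ultimately have "x \<in> steady_states m y y k"
          unfolding original by simp
        then show False
          using no_original by simp
      qed
      then show ?thesis
        using no_original rw_set_effective_rate by blast
    qed
  qed
qed

end

theorem lemma6p1:
  fixes y yt ytK :: "nat \<Rightarrow> real^'s::finite"
    and m mt :: nat and R Rt :: "(nat \<times> nat) set"
    and k bt lam :: "nat \<Rightarrow> nat \<Rightarrow> real" and h hK :: "nat \<Rightarrow> nat" and CR :: "nat set"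
  assumes "crn m y R" and "rw_set R k"
    and "rw_translation m y R k mt yt ytK Rt bt h hK lam"
    and "\<not> inj_on h (kin_rel m y k)"
    and "weakly_reversible mt Rt"
    and "deficiency mt yt Rt = 0"
    and "S_I y (kin_rel m y k) h \<subseteq> kin_order_space ytK Rt"
    and "resolving_set mt Rt (kin_rel mt yt bt) y (kin_rel m y k) h hK CR"
    and "C_I (kin_rel m y k) h \<inter> CR = {}"
    and "\<forall>p'\<in>C_I (kin_rel m y k) h. \<exists>k'\<in>kin_rel mt yt bt. k' \<noteq> p' \<and>
           (\<forall>i'\<in>CR. \<forall>xs. is_path Rt xs p' i' \<longrightarrow> k' \<in> set xs)"
  shows "\<exists>Kt. rw_set Rt Kt \<and> steady_states m y y k = steady_states mt yt ytK Kt"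
proof -
  interpret resolvable_translation m mt y yt ytK R Rt k bt lam h hK CR
    using assms(1-3,5,6,8-10) by unfold_locales
  show ?thesis
    by (rule steady_state_resolvable)
qed

end
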